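(* Let $C_1>0$, $C_2>0$. For $\xi\in\mathbb{C}$ write $\xi=r_1e^{i\theta_1}$ and $\xi-C_1=r_2e^{i\theta_2}$ with $r_1,r_2\ge0$, $\theta_1,\theta_2\in[0,2\pi)$, and define $\sqrt{\xi(\xi-C_1)}:=(r_1r_2)^{1/2}e^{i(\theta_1+\theta_2)/2}$. Define $$R^D(\xi):=\frac{C_2}{\sqrt{\xi(\xi-C_1)}-C_2}.$$ Let $\xi_p:=\frac{C_1+\sqrt{C_1^2+4C_2^2}}{2}$, $\psi(u):=\frac{C_2\sqrt{u(C_1-u)}}{\pi[C_2^2+u(C_1-u)]}$ for $u\in[0,C_1]$, and $r:=\frac{2C_2\sqrt{\xi_p(\xi_p-C_1)}}{2\xi_p-C_1}$. Then $R^D$ is analytic in $\mathbb{C}\setminus([0,C_1]\cup\{\xi_p\})$, has a simple pole at $\xi_p$ with residue $r$, $-R^D$ maps the upper half plane into the upper half plane, and for every $\xi\in\mathbb{C}\setminus[0,\xi_p]$ $$R^D(\xi)=\int_0^{C_1}\frac{\psi(u)\,du}{\xi-u}+\frac{r}{\xi-\xi_p}.$$ Moreover $\int_0^{C_1}\frac{\psi(u)}{u}\,du+\frac{r}{\xi_p}=1$.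
   Context: In the JKD model $C_2=FK_0/\nu$ and $C_1=4C_2FK_0/\Lambda^2$, and $R^D(\xi)=-s\,(F/\nu)K^D(is)$ with $s=-i\omega$, $\xi=-1/s$, where $K^D(\omega)=K_0/(\sqrt{1-iC_1\omega}-iC_2\omega)$. *)

theory Defs
  imports "HOL-Analysis.Analysis"
begin

definition arg02 :: "complex \<Rightarrow> real" where
  "arg02 z = (if Arg z \<ge> 0 then Arg z else Arg z + 2 * pi)"

definition sqrtD :: "real \<Rightarrow> complex \<Rightarrow> complex" where
  "sqrtD C1 \<xi> = complex_of_real (sqrt (norm \<xi> * norm (\<xi> - complex_of_real C1)))
                 * cis ((arg02 \<xi> + arg02 (\<xi> - complex_of_real C1)) / 2)"

definition RD :: "real \<Rightarrow> real \<Rightarrow> complex \<Rightarrow> complex" where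
  "RD C1 C2 \<xi> = complex_of_real C2 / (sqrtD C1 \<xi> - complex_of_real C2)"

definition xi_p :: "real \<Rightarrow> real \<Rightarrow> real" where
  "xi_p C1 C2 = (C1 + sqrt (C1\<^sup>2 + 4 * C2\<^sup>2)) / 2"

definition psiD :: "real \<Rightarrow> real \<Rightarrow> real \<Rightarrow> real" where
  "psiD C1 C2 u = C2 * sqrt (u * (C1 - u)) / (pi * (C2\<^sup>2 + u * (C1 - u)))"

definition resD :: "real \<Rightarrow> real \<Rightarrow> real" where
  "resD C1 C2 = 2 * C2 * sqrt (xi_p C1 C2 * (xi_p C1 C2 - C1)) / (2 * xi_p C1 C2 - C1)"

definition simple_pole_res :: "(complex \<Rightarrow> complex) \<Rightarrow> complex \<Rightarrow> complex \<Rightarrow> bool" where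
  "simple_pole_res f z r \<longleftrightarrow> r \<noteq> 0 \<and>
     (\<exists>e>0. \<exists>g. g holomorphic_on ball z e \<and>
        (\<forall>w\<in>ball z e - {z}. f w = r / (w - z) + g w))"

end

theory Submission
  imports Defs
begin

text \<open>The branch \<open>sqrtD C1\<close> equals \<open>csqrt z * csqrt (z - C1)\<close>, which is holomorphic off
  \<open>[0, C1]\<close>, maps the upper half plane into itself, and takes the values \<open>C2\<close> and \<open>-C2\<close>
  exactly at the two roots \<open>xi_p > C1\<close> and \<open>xi_m < 0\<close> of \<open>z (z - C1) = C2\<^sup>2\<close>; so \<open>RD\<close>
  has a single pole, at \<open>xi_p\<close>.
  The Stieltjes representation comes from the substitution \<open>u = C1 sin\<^sup>2 t\<close>, which turns
  \<open>psiD\<close> into a rational function of \<open>u\<close>. Partial fractions with respect to \<open>u\<close> reduce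
  everything to the integral of \<open>1 / (z - C1 sin\<^sup>2 t)\<close> over \<open>[0, pi/2]\<close>, which is
  \<open>(pi/2) / sqrtD C1 z\<close>, computed
  with the antiderivative \<open>Arctan (k tan t) / sqrtD C1 z\<close>, \<open>k = sqrtD C1 z / z\<close>. At \<open>xi_m\<close>,
  where the partial fractions degenerate, and for the moment \<open>\<integral> psiD u / u\<close>, where the
  integrand is unbounded, one passes to the limit from the left by monotone convergence.\<close>

section \<open>The branch of the square root\<close>

lemma csqrt_eq_rcis: "csqrt z = rcis (sqrt (norm z)) (Arg z / 2)"
proof (rule csqrt_unique)
  show "(rcis (sqrt (norm z)) (Arg z / 2))\<^sup>2 = z"
    by (simp add: DeMoivre2 rcis_cmod_Arg)
  have "cos (Arg z / 2) > 0" if "Arg z \<noteq> pi"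
    using mpi_less_Arg[of z] Arg_le_pi[of z] that by (intro cos_gt_zero_pi) auto
  then show "0 < Re (rcis (sqrt (norm z)) (Arg z / 2)) \<or>
      Re (rcis (sqrt (norm z)) (Arg z / 2)) = 0 \<and> 0 \<le> Im (rcis (sqrt (norm z)) (Arg z / 2))"
    by (cases "z = 0 \<or> Arg z = pi") auto
qed

text \<open>In the lower half plane both angles in \<open>[0, 2 pi)\<close> exceed the principal arguments
  by \<open>2 pi\<close>, which does not change the half angle modulo \<open>2 pi\<close>.\<close>
lemma sqrtD_eq_csqrt_mult: "sqrtD a z = csqrt z * csqrt (z - of_real a)"
proof -
  have prod: "csqrt z * csqrt (z - of_real a) =
      rcis (sqrt (norm z) * sqrt (norm (z - of_real a))) (Arg z / 2 + Arg (z - of_real a) / 2)"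
    by (simp add: csqrt_eq_rcis rcis_mult)
  show ?thesis
  proof (cases "Im z < 0")
    case True
    then have "Arg z < 0" "Arg (z - of_real a) < 0" by (auto simp: Arg_neg_iff)
    then have "(arg02 z + arg02 (z - of_real a)) / 2 = Arg z / 2 + Arg (z - of_real a) / 2 + 2 * pi"
      by (simp add: arg02_def)
    then have "cis ((arg02 z + arg02 (z - of_real a)) / 2) = cis (Arg z / 2 + Arg (z - of_real a) / 2)"
      by (metis cis_2pi cis_mult mult_1_right)
    then show ?thesis unfolding prod sqrtD_def rcis_def by (simp add: real_sqrt_mult)
  next
    case False
    then have "Arg z \<ge> 0" "Arg (z - of_real a) \<ge> 0" by (auto simp: Arg_less_0)
    then show ?thesis unfolding prod sqrtD_def rcis_def
      by (simp add: arg02_def real_sqrt_mult add_divide_distrib)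
  qed
qed

lemma Im_eq_double_Re_csqrt_Im_csqrt: "Im w = 2 * (Re (csqrt w) * Im (csqrt w))"
proof -
  obtain c where c: "c = csqrt w" by blast
  have "c\<^sup>2 = w" unfolding c by (simp del: csqrt.sel)
  then show ?thesis unfolding c[symmetric] using Im_power2[of c] by simp
qed

lemma csqrt_Im_pos:
  assumes "Im w > 0"
  shows "Re (csqrt w) > 0" "Im (csqrt w) > 0"
proof -
  obtain c where c: "c = csqrt w" by blast
  have "Re c * Im c > 0" "Re c \<ge> 0"
    using assms Im_eq_double_Re_csqrt_Im_csqrt[of w] Re_csqrt[of w] unfolding c[symmetric] by linarith+
  then show "Re (csqrt w) > 0" "Im (csqrt w) > 0"
    unfolding c[symmetric] by (auto simp: zero_less_mult_iff)
qed

lemma csqrt_Im_neg: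
  assumes "Im w < 0"
  shows "Re (csqrt w) > 0" "Im (csqrt w) < 0"
proof -
  obtain c where c: "c = csqrt w" by blast
  have "Re c * Im c < 0" "Re c \<ge> 0"
    using assms Im_eq_double_Re_csqrt_Im_csqrt[of w] Re_csqrt[of w] unfolding c[symmetric] by linarith+
  then show "Re (csqrt w) > 0" "Im (csqrt w) < 0"
    unfolding c[symmetric] by (auto simp: mult_less_0_iff)
qed

lemma sqrtD_square: "(sqrtD a z)\<^sup>2 = z * (z - of_real a)"
  by (simp add: sqrtD_eq_csqrt_mult power_mult_distrib)

lemma sqrtD_eq_minus_csqrt_mult:
  assumes "\<not> (Im z = 0 \<and> Re z > 0)" and "a \<ge> 0"
  shows "sqrtD a z = - (csqrt (- z) * csqrt (of_real a - z))"
proof (cases "Im z < 0")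
  case True
  then have "csqrt (- z) = \<i> * csqrt z" "csqrt (of_real a - z) = \<i> * csqrt (z - of_real a)"
    using csqrt_minus[of z] csqrt_minus[of "z - of_real a"] by auto
  then show ?thesis
    unfolding sqrtD_eq_csqrt_mult by (simp add: algebra_simps)
next
  case False
  then have "Im z > 0 \<or> Im z = 0 \<and> Re z \<le> 0" using assms(1) by auto
  then have "csqrt z = \<i> * csqrt (- z)" "csqrt (z - of_real a) = \<i> * csqrt (of_real a - z)"
    using assms(2) csqrt_minus[of "- z"] csqrt_minus[of "of_real a - z"] by auto
  then show ?thesis
    unfolding sqrtD_eq_csqrt_mult by (simp add: algebra_simps)
qed

lemma sqrtD_of_real_nonpos:
  assumes "x \<le> 0" and "a \<ge> 0"
  shows "sqrtD a (of_real x) = - of_real (sqrt (- x) * sqrt (a - x))"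
  using sqrtD_eq_minus_csqrt_mult[of "of_real x" a] assms by (simp add: csqrt_of_real)

lemma sqrtD_of_real_ge:
  assumes "x \<ge> a" and "a \<ge> 0"
  shows "sqrtD a (of_real x) = of_real (sqrt x * sqrt (x - a))"
  using assms by (simp add: sqrtD_eq_csqrt_mult csqrt_of_real flip: of_real_diff)

lemma Im_sqrtD_pos: "Im z > 0 \<Longrightarrow> Im (sqrtD a z) > 0"
  using csqrt_Im_pos[of z] csqrt_Im_pos[of "z - of_real a"]
  by (simp add: sqrtD_eq_csqrt_mult add_pos_pos)

lemma Re_sqrtD_div_pos:
  assumes "a > 0" and z: "z \<notin> of_real ` {0..a}"
  shows "Re (sqrtD a z / z) > 0"
proof -
  define A B where "A = csqrt z" and "B = csqrt (z - of_real a)"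
  have "z \<noteq> 0" using z assms(1) by force
  then have "A \<noteq> 0" by (simp add: A_def)
  have "sqrtD a z = A * B" by (simp add: sqrtD_eq_csqrt_mult A_def B_def)
  moreover have "z = A * A" unfolding A_def by (simp del: csqrt.sel flip: power2_eq_square)
  ultimately have "sqrtD a z / z = B / A" using \<open>A \<noteq> 0\<close> by simp
  moreover have "Re A * Re B + Im A * Im B > 0"
  proof -
    have "\<not> (Im z = 0 \<and> 0 \<le> Re z \<and> Re z \<le> a)"
    proof
      assume "Im z = 0 \<and> 0 \<le> Re z \<and> Re z \<le> a"
      then have "z = of_real (Re z)" "Re z \<in> {0..a}" by (auto simp: complex_eq_iff)
      with z show False by blast
    qed
    then consider "Im z > 0" | "Im z < 0" | "Im z = 0" "Re z > a" | "Im z = 0" "Re z < 0"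
      by linarith
    then show ?thesis
    proof cases
      case 1
      then show ?thesis using csqrt_Im_pos[of z] csqrt_Im_pos[of "z - of_real a"]
        by (simp add: A_def B_def add_pos_pos)
    next
      case 2
      then show ?thesis using csqrt_Im_neg[of z] csqrt_Im_neg[of "z - of_real a"]
        by (simp add: A_def B_def add_pos_pos mult_neg_neg)
    next
      case 3
      then show ?thesis using assms(1) by (simp add: A_def B_def)
    next
      case 4
      then show ?thesis using assms(1) by (simp add: A_def B_def)
    qed
  qed
  moreover have "(Re A)\<^sup>2 + (Im A)\<^sup>2 > 0"
    using \<open>A \<noteq> 0\<close> by (simp add: sum_power2_gt_zero_iff complex_eq_iff)
  ultimately show ?thesis by (simp add: Re_divide power2_eq_square mult.commute)
qed

lemma holomorphic_on_sqrtD: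
  assumes "a \<ge> 0"
  shows "sqrtD a holomorphic_on - of_real ` {0..a}"
proof -
  define U where "U = {z. Im z < 0} \<union> {z. Im z > 0} \<union> {z. Re z > a}"
  define V where "V = {z. Im z < 0} \<union> {z. Im z > 0} \<union> {z. Re z < 0}"
  have "open U" "open V" unfolding U_def V_def
    by (intro open_Un open_halfspace_Im_lt open_halfspace_Im_gt open_halfspace_Re_gt
        open_halfspace_Re_lt)+
  have "(\<lambda>z. csqrt z * csqrt (z - of_real a)) holomorphic_on U"
    by (intro holomorphic_intros) (use assms in \<open>auto simp: U_def complex_nonpos_Reals_iff\<close>)
  then have "sqrtD a holomorphic_on U"
    by (simp add: sqrtD_eq_csqrt_mult[abs_def])
  moreover have "(\<lambda>z. - (csqrt (- z) * csqrt (of_real a - z))) holomorphic_on V"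
    by (intro holomorphic_intros) (use assms in \<open>auto simp: V_def complex_nonpos_Reals_iff\<close>)
  then have "sqrtD a holomorphic_on V"
    by (rule holomorphic_transform)
      (use assms in \<open>auto simp: V_def intro!: sqrtD_eq_minus_csqrt_mult[symmetric]\<close>)
  ultimately have "sqrtD a holomorphic_on U \<union> V"
    using \<open>open U\<close> \<open>open V\<close> by (rule holomorphic_on_Un)
  moreover have "z \<in> U \<union> V" if "z \<notin> of_real ` {0..a}" for z
  proof (rule ccontr)
    assume "z \<notin> U \<union> V"
    then have "z = of_real (Re z)" "Re z \<in> {0..a}" by (auto simp: U_def V_def complex_eq_iff)
    with that show False by blast
  qed
  then have "- of_real ` {0..a} \<subseteq> U \<union> V" by blast
  ultimately show ?thesis by (rule holomorphic_on_subset)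
qed

section \<open>The integral of \<open>1 / (z - a sin\<^sup>2 t)\<close>\<close>

lemma Arctan_add_Arctan_inverse:
  assumes "Re k > 0"
  shows "Arctan k + Arctan (1 / k) = of_real (pi / 2)"
proof -
  define S where "S = {w::complex. Re w > 0}"
  have "\<exists>c. \<forall>x\<in>S. Arctan x + Arctan (1 / x) = c"
  proof (rule has_field_derivative_zero_constant)
    show "convex S" unfolding S_def by (rule convex_halfspace_Re_gt)
    fix x assume "x \<in> S"
    then have x: "x \<noteq> 0" "Re x > 0" unfolding S_def by auto
    then have "Re (1 / x) > 0"
      by (auto simp: Re_divide intro!: divide_pos_pos add_pos_nonneg)
    then have "((\<lambda>x. Arctan x + Arctan (1 / x)) has_field_derivative
        inverse (1 + x\<^sup>2) + inverse (1 + (1 / x)\<^sup>2) * (- 1 / x\<^sup>2)) (at x)"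
      using x by (intro DERIV_add has_field_derivative_Arctan DERIV_chain2[where f = Arctan])
        (auto intro!: derivative_eq_intros simp: power2_eq_square)
    moreover have "inverse (1 + (1 / x)\<^sup>2) * (- 1 / x\<^sup>2) = - inverse (1 + x\<^sup>2)"
      using x by (simp add: field_simps power2_eq_square)
    ultimately show "((\<lambda>x. Arctan x + Arctan (1 / x)) has_field_derivative 0) (at x within S)"
      by (simp add: has_field_derivative_at_within)
  qed
  then obtain c where c: "\<And>x. x \<in> S \<Longrightarrow> Arctan x + Arctan (1 / x) = c" by blast
  have "c = 2 * Arctan 1" using c[of 1] by (simp add: S_def)
  also have "\<dots> = of_real (pi / 2)"
    using Arctan_of_real[of 1] by (simp add: arctan_one mult.commute)
  finally show ?thesis using c[of k] assms by (simp add: S_def)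
qed

lemma has_vector_derivative_Arctan_of_real:
  fixes k :: complex and h :: "real \<Rightarrow> real"
  assumes h: "(h has_real_derivative h') (at x within S)"
    and "Re k > 0" and "h x \<ge> 0"
  shows "((\<lambda>t. Arctan (k * of_real (h t))) has_vector_derivative
            (k * of_real h' * inverse (1 + (k * of_real (h x))\<^sup>2))) (at x within S)"
proof -
  have d1: "((\<lambda>t. k * of_real (h t)) has_vector_derivative (k * of_real h')) (at x within S)"
    by (intro has_vector_derivative_mult_right has_vector_derivative_of_real h)
  have "Re (k * of_real (h x)) = 0 \<Longrightarrow> \<bar>Im (k * of_real (h x))\<bar> < 1" using assms(2,3) by simp
  then have d2: "(Arctan has_field_derivative inverse (1 + (k * of_real (h x))\<^sup>2))
      (at (k * of_real (h x)) within (\<lambda>t. k * of_real (h t)) ` S)"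
    by (rule has_field_derivative_at_within[OF has_field_derivative_Arctan])
  show ?thesis using field_vector_diff_chain_within[OF d1 d2] by (simp add: o_def)
qed

text \<open>With \<open>c = cos t\<close>, \<open>w = sin t\<close> and \<open>k\<^sup>2 z = z - a\<close>, this is the derivative of both
  \<open>Arctan (k tan t) / (k z)\<close> and \<open>- Arctan (cot t / k) / (k z)\<close>.\<close>
lemma Arctan_antiderivative_identity:
  fixes k z c w a :: complex
  assumes "k\<^sup>2 * z = z - a" "c\<^sup>2 + w\<^sup>2 = 1" "k \<noteq> 0" "z - a * w\<^sup>2 \<noteq> 0"
  shows "k / ((c\<^sup>2 + k\<^sup>2 * w\<^sup>2) * (k * z)) = 1 / (z - a * w\<^sup>2)"
proof -
  have "z * (c\<^sup>2 + k\<^sup>2 * w\<^sup>2) = z * c\<^sup>2 + (k\<^sup>2 * z) * w\<^sup>2"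
    by (simp add: algebra_simps)
  also have "\<dots> = z * (c\<^sup>2 + w\<^sup>2) - a * w\<^sup>2"
    unfolding assms(1) by (simp add: algebra_simps)
  also have "\<dots> = z - a * w\<^sup>2" using assms(2) by simp
  finally have "(c\<^sup>2 + k\<^sup>2 * w\<^sup>2) * (k * z) = k * (z - a * w\<^sup>2)" by (simp add: ac_simps)
  with assms(3) show ?thesis by simp
qed

lemma sin_sq_kernel_has_integral_lower:
  fixes k z :: complex
  assumes "Re k > 0" and k2: "k\<^sup>2 * z = z - of_real a"
    and den: "\<And>t. z \<noteq> of_real (a * (sin t)\<^sup>2)"
  shows "((\<lambda>t. 1 / (z - of_real (a * (sin t)\<^sup>2))) has_integral Arctan k / (k * z)) {0..pi / 4}"
proof -
  have k0: "k \<noteq> 0" using assms(1) by auto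
  have cs: "(of_real (cos t) :: complex)\<^sup>2 + (of_real (sin t))\<^sup>2 = 1" for t
    by (simp flip: of_real_power of_real_add)
  have den': "z - of_real a * (of_real (sin t))\<^sup>2 \<noteq> 0" for t
    using den[of t] by simp
  define F where "F t = Arctan (k * of_real (tan t)) / (k * z)" for t
  have "((\<lambda>t. 1 / (z - of_real (a * (sin t)\<^sup>2))) has_integral F (pi / 4) - F 0) {0..pi / 4}"
  proof (rule fundamental_theorem_of_calculus)
    fix t assume "t \<in> {0..pi / 4}"
    then have t: "0 \<le> t" "t \<le> pi / 4" by auto
    have ct: "cos t > 0" by (rule cos_gt_zero_pi) (use t pi_gt_zero in linarith)+
    have st: "sin t \<ge> 0" by (rule sin_ge_zero) (use t pi_gt_zero in linarith)+
    have "(tan has_real_derivative inverse ((cos t)\<^sup>2)) (at t within {0..pi / 4})"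
      using DERIV_tan[of t] ct by (auto intro: has_field_derivative_at_within)
    then have "(F has_vector_derivative
        k * of_real (inverse ((cos t)\<^sup>2)) * inverse (1 + (k * of_real (tan t))\<^sup>2) / (k * z))
        (at t within {0..pi / 4})"
      unfolding F_def using assms(1) ct st
      by (intro has_vector_derivative_divide has_vector_derivative_Arctan_of_real)
        (auto simp: tan_def)
    moreover have "k * of_real (inverse ((cos t)\<^sup>2)) * inverse (1 + (k * of_real (tan t))\<^sup>2) / (k * z)
        = k / (((of_real (cos t))\<^sup>2 + k\<^sup>2 * (of_real (sin t))\<^sup>2) * (k * z))"
      using ct den'[of t] Arctan_antiderivative_identity[OF k2 cs k0 den', of t]
      by (simp add: tan_def field_simps power2_eq_square)
    ultimately show "(F has_vector_derivative 1 / (z - of_real (a * (sin t)\<^sup>2)))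
        (at t within {0..pi / 4})"
      using Arctan_antiderivative_identity[OF k2 cs k0 den', of t] by simp
  qed simp
  then show ?thesis by (simp add: F_def tan_45)
qed

lemma sin_sq_kernel_has_integral_upper:
  fixes k z :: complex
  assumes "Re k > 0" and k2: "k\<^sup>2 * z = z - of_real a"
    and den: "\<And>t. z \<noteq> of_real (a * (sin t)\<^sup>2)"
  shows "((\<lambda>t. 1 / (z - of_real (a * (sin t)\<^sup>2))) has_integral Arctan (1 / k) / (k * z))
           {pi / 4..pi / 2}"
proof -
  have k0: "k \<noteq> 0" using assms(1) by auto
  have "Re (1 / k) > 0"
    using assms(1) by (auto simp: Re_divide intro!: divide_pos_pos add_pos_nonneg)
  have cs: "(of_real (cos t) :: complex)\<^sup>2 + (of_real (sin t))\<^sup>2 = 1" for t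
    by (simp flip: of_real_power of_real_add)
  have den': "z - of_real a * (of_real (sin t))\<^sup>2 \<noteq> 0" for t
    using den[of t] by simp
  define F where "F t = - (Arctan ((1 / k) * of_real (cot t)) / (k * z))" for t
  have "((\<lambda>t. 1 / (z - of_real (a * (sin t)\<^sup>2))) has_integral F (pi / 2) - F (pi / 4))
      {pi / 4..pi / 2}"
  proof (rule fundamental_theorem_of_calculus)
    fix t assume "t \<in> {pi / 4..pi / 2}"
    then have t: "pi / 4 \<le> t" "t \<le> pi / 2" by auto
    have st: "sin t > 0" by (rule sin_gt_zero) (use t pi_gt_zero in linarith)+
    have ct: "cos t \<ge> 0" by (rule cos_ge_zero) (use t pi_gt_zero in linarith)+
    have "(cot has_real_derivative - inverse ((sin t)\<^sup>2)) (at t within {pi / 4..pi / 2})"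
      using DERIV_cot[of t] st by (auto intro: has_field_derivative_at_within)
    then have "(F has_vector_derivative - ((1 / k) * of_real (- inverse ((sin t)\<^sup>2))
        * inverse (1 + ((1 / k) * of_real (cot t))\<^sup>2) / (k * z))) (at t within {pi / 4..pi / 2})"
      unfolding F_def using \<open>Re (1 / k) > 0\<close> ct st
      by (intro has_vector_derivative_minus has_vector_derivative_divide
          has_vector_derivative_Arctan_of_real) (auto simp: cot_def)
    moreover have "- ((1 / k) * of_real (- inverse ((sin t)\<^sup>2))
        * inverse (1 + ((1 / k) * of_real (cot t))\<^sup>2) / (k * z))
        = k / (((of_real (cos t))\<^sup>2 + k\<^sup>2 * (of_real (sin t))\<^sup>2) * (k * z))"
    proof -
      define c w where "c = complex_of_real (cos t)" and "w = complex_of_real (sin t)"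
      have w0: "w \<noteq> 0" using st by (simp add: w_def)
      have "1 + ((1 / k) * of_real (cot t))\<^sup>2 = (c\<^sup>2 + k\<^sup>2 * w\<^sup>2) / (k\<^sup>2 * w\<^sup>2)"
        using w0 k0 by (simp add: c_def w_def cot_def field_simps power2_eq_square)
      moreover have "of_real (- inverse ((sin t)\<^sup>2)) = - (1 / w\<^sup>2)"
        by (simp add: w_def divide_inverse)
      ultimately show ?thesis
        using w0 k0 by (simp add: c_def[symmetric] w_def[symmetric] power2_eq_square)
    qed
    ultimately show "(F has_vector_derivative 1 / (z - of_real (a * (sin t)\<^sup>2)))
        (at t within {pi / 4..pi / 2})"
      using Arctan_antiderivative_identity[OF k2 cs k0 den', of t] by simp
  qed simp
  then show ?thesis by (simp add: F_def cot_def cos_45 sin_45)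
qed

lemma sin_sq_kernel_has_integral:
  assumes a: "a > 0" and z: "z \<notin> of_real ` {0..a}"
  shows "((\<lambda>t. 1 / (z - of_real (a * (sin t)\<^sup>2))) has_integral of_real (pi / 2) / sqrtD a z)
           {0..pi / 2}"
proof -
  define k where "k = sqrtD a z / z"
  have "z \<noteq> 0" using z a by force
  then have kz: "k * z = sqrtD a z" by (simp add: k_def)
  have "Re k > 0" unfolding k_def using Re_sqrtD_div_pos[OF a z] .
  have k2: "k\<^sup>2 * z = z - of_real a"
    using \<open>z \<noteq> 0\<close> sqrtD_square[of a z] by (simp add: k_def power2_eq_square)
  have den: "z \<noteq> of_real (a * (sin t)\<^sup>2)" for t
  proof -
    have "(sin t)\<^sup>2 \<le> 1" by (simp add: sin_squared_eq)
    then have "a * (sin t)\<^sup>2 \<in> {0..a}" using a by (simp add: mult_left_le)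
    then show ?thesis using z by blast
  qed
  have "((\<lambda>t. 1 / (z - of_real (a * (sin t)\<^sup>2))) has_integral
      Arctan k / (k * z) + Arctan (1 / k) / (k * z)) {0..pi / 2}"
    using sin_sq_kernel_has_integral_lower[OF \<open>Re k > 0\<close> k2 den]
      sin_sq_kernel_has_integral_upper[OF \<open>Re k > 0\<close> k2 den]
    by (rule has_integral_combine[rotated 2]) auto
  then show ?thesis
    by (simp add: Arctan_add_Arctan_inverse[OF \<open>Re k > 0\<close>] kz flip: add_divide_distrib)
qed

lemma has_integral_sin_sq_substitution:
  fixes F :: "real \<Rightarrow> 'a::euclidean_space"
  assumes "a \<ge> 0" and F: "continuous_on {0..a} F"
    and "((\<lambda>t. (2 * a * sin t * cos t) *\<^sub>R F (a * (sin t)\<^sup>2)) has_integral I) {0..pi / 2}"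
  shows "(F has_integral I) {0..a}"
proof -
  define y where "y t = a * (sin t)\<^sup>2" for t
  have "((\<lambda>t. (2 * a * sin t * cos t) *\<^sub>R F (y t)) has_integral integral {y 0..y (pi / 2)} F)
      {0..pi / 2}"
  proof (rule has_integral_substitution_strong[of "{}" 0 "pi / 2" y 0 a])
    have "(sin t)\<^sup>2 \<le> 1" for t :: real by (simp add: sin_squared_eq)
    then show "y ` {0..pi / 2} \<subseteq> {0..a}"
      using assms(1) by (auto simp: y_def mult_left_le)
    show "continuous_on {0..pi / 2} y" unfolding y_def by (intro continuous_intros)
    fix t
    show "(y has_real_derivative 2 * a * sin t * cos t) (at t within {0..pi / 2})"
      unfolding y_def by (auto intro!: derivative_eq_intros simp: power2_eq_square)
  qed (use assms in \<open>auto simp: y_def\<close>)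
  then have "integral {0..a} F = I"
    using assms(3) by (simp add: y_def has_integral_unique)
  with integrable_continuous_interval[OF F] show ?thesis
    using has_integral_integrable_integral by blast
qed

lemma inverse_triple_product_partial_fractions:
  fixes a b x u v w :: complex
  assumes "a \<noteq> 0" "b \<noteq> 0" "x \<noteq> 0" "u \<noteq> 0" "v \<noteq> 0" "w \<noteq> 0"
    and "u = b - a" "v = x - a" "w = x - b"
  shows "1 / (a * b * x) = 1 / (u * v * a) - 1 / (u * w * b) + 1 / (v * w * x)"
  using assms(1-6) by (simp add: field_simps) (simp add: assms(7-9) algebra_simps)

lemma partial_fractions_three:
  fixes X Y p m C :: complex
  assumes "X \<noteq> Y" "p \<noteq> Y" "m \<noteq> Y" "X \<noteq> p" "X \<noteq> m" "p \<noteq> m"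
  shows "(1 - C\<^sup>2 / ((p - Y) * (Y - m))) / (X - Y) = 1 / (X - Y)
    + C\<^sup>2 * (1 / ((m - p) * (X - p) * (p - Y)) - 1 / ((m - p) * (X - m) * (m - Y))
      + 1 / ((X - p) * (X - m) * (X - Y)))"
proof -
  have pf: "1 / ((p - Y) * (m - Y) * (X - Y)) = 1 / ((m - p) * (X - p) * (p - Y))
      - 1 / ((m - p) * (X - m) * (m - Y)) + 1 / ((X - p) * (X - m) * (X - Y))"
    using assms by (intro inverse_triple_product_partial_fractions) auto
  have "(p - Y) * (Y - m) = - ((p - Y) * (m - Y))" by (simp add: algebra_simps)
  then have "(1 - C\<^sup>2 / ((p - Y) * (Y - m))) / (X - Y) = (1 + C\<^sup>2 / ((p - Y) * (m - Y))) / (X - Y)"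
    by simp
  also have "\<dots> = 1 / (X - Y) + C\<^sup>2 * (1 / ((p - Y) * (m - Y) * (X - Y)))"
    by (simp add: add_divide_distrib divide_divide_eq_left)
  finally show ?thesis unfolding pf .
qed

lemma Stieltjes_value_identity:
  fixes s P M C :: complex
  assumes s2: "s\<^sup>2 = P * M + C\<^sup>2" and "P \<noteq> 0" "M \<noteq> 0" "s \<noteq> 0" "s \<noteq> C" "M \<noteq> P"
  shows "C / s + C ^ 3 / (P * M * s) - C\<^sup>2 / ((M - P) * P) - C\<^sup>2 / ((M - P) * M)
    = C / (s - C) - 2 * C\<^sup>2 / ((M - P) * P)"
proof -
  have sq: "(s - C) * (s + C) = P * M" using s2 by (simp add: algebra_simps power2_eq_square)
  then have "s + C \<noteq> 0" "s - C \<noteq> 0" using assms(2,3) by auto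
  have "C / s + C ^ 3 / (P * M * s) = C * (P * M + C\<^sup>2) / (P * M * s)"
    using assms(2-4) by (simp add: field_simps power2_eq_square power3_eq_cube)
  also have "\<dots> = C * s\<^sup>2 / (P * M * s)" by (simp only: s2)
  also have "\<dots> = C * s / (P * M)" using assms(4) by (simp add: power2_eq_square)
  finally have a: "C / s + C ^ 3 / (P * M * s) = C * s / (P * M)" .
  have "C / (s - C) = C * (s + C) / ((s - C) * (s + C))" using \<open>s + C \<noteq> 0\<close> by simp
  then have b: "C / (s - C) = C * s / (P * M) + C\<^sup>2 / (P * M)"
    unfolding sq by (simp add: add_divide_distrib algebra_simps power2_eq_square)
  have c: "C\<^sup>2 / ((M - P) * P) - C\<^sup>2 / ((M - P) * M) = C\<^sup>2 / (P * M)"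
  proof -
    define D where "D = M - P"
    have "D \<noteq> 0" using assms(6) by (simp add: D_def)
    have "C\<^sup>2 / (D * P) - C\<^sup>2 / (D * M) = C\<^sup>2 * (M - P) / (D * P * M)"
      using \<open>D \<noteq> 0\<close> assms(2,3) by (simp add: field_simps)
    also have "\<dots> = C\<^sup>2 / (P * M)" using \<open>D \<noteq> 0\<close> by (simp add: D_def)
    finally show ?thesis by (simp add: D_def)
  qed
  show ?thesis unfolding a b c[symmetric] by (simp add: algebra_simps)
qed

lemma pole_split_identity:
  fixes s P M C r :: complex
  assumes s2: "s\<^sup>2 = P * M + C\<^sup>2" and "P \<noteq> 0" "M \<noteq> 0" "s \<noteq> C" "s \<noteq> - C"
    and "r * (M - P) = 2 * C\<^sup>2"
  shows "C / (s - C) = r / P + (C / (s + C) - r / M)"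
proof -
  have "s - C \<noteq> 0" "s + C \<noteq> 0" using assms(4,5) by (auto simp: add_eq_0_iff)
  have "(s - C) * (s + C) = P * M" using s2 by (simp add: algebra_simps power2_eq_square)
  then have "C / (s - C) - C / (s + C) = 2 * C\<^sup>2 / (P * M)"
    using \<open>s - C \<noteq> 0\<close> \<open>s + C \<noteq> 0\<close> by (simp add: diff_frac_eq algebra_simps power2_eq_square)
  moreover have "r / P - r / M = 2 * C\<^sup>2 / (P * M)"
    using assms(2,3) by (simp add: diff_frac_eq assms(6)[symmetric] algebra_simps)
  ultimately show ?thesis by (simp add: algebra_simps)
qed

lemma incseq_tendsto_left_avoiding:
  fixes x c :: real
  obtains xs where "\<And>n. xs n < x" "\<And>n. xs n \<noteq> c" "incseq xs" "xs \<longlonglongrightarrow> x"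
proof -
  define \<delta> where "\<delta> = (if x = c then 1 else \<bar>x - c\<bar> / 2)"
  define xs where "xs n = x - \<delta> / real (Suc n)" for n
  have "\<delta> > 0" by (simp add: \<delta>_def)
  have "xs n < x" for n
  proof -
    have "\<delta> / real (Suc n) > 0" using \<open>\<delta> > 0\<close> by simp
    then show ?thesis by (simp add: xs_def)
  qed
  moreover have "xs n \<noteq> c" for n
  proof (cases "x = c")
    case False
    have "\<bar>xs n - x\<bar> = \<delta> / real (Suc n)" using \<open>\<delta> > 0\<close> by (simp add: xs_def)
    also have "\<dots> \<le> \<delta>" using \<open>\<delta> > 0\<close> by (simp add: divide_le_eq)
    also have "\<dots> < \<bar>x - c\<bar>" using False by (simp add: \<delta>_def)
    finally show ?thesis by auto
  qed (use \<open>xs n < x\<close> in simp)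
  moreover have "incseq xs"
  proof (rule incseq_SucI)
    fix n
    have "\<delta> / real (Suc (Suc n)) \<le> \<delta> / real (Suc n)"
      using \<open>\<delta> > 0\<close> by (intro divide_left_mono) auto
    then show "xs n \<le> xs (Suc n)" by (simp add: xs_def)
  qed
  moreover have "xs \<longlonglongrightarrow> x"
  proof -
    have "(\<lambda>n. x - \<delta> * inverse (real (Suc n))) \<longlonglongrightarrow> x - \<delta> * 0"
      by (intro tendsto_intros LIMSEQ_inverse_real_of_nat)
    moreover have "xs = (\<lambda>n. x - \<delta> * inverse (real (Suc n)))"
      by (rule ext) (simp add: xs_def divide_inverse)
    ultimately show ?thesis by (simp only: mult_zero_right diff_zero)
  qed
  ultimately show ?thesis using that by blast
qed

text \<open>By monotone convergence, which also covers \<open>x = a\<close>, where the integrand is unbounded.\<close>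
lemma has_integral_div_diff_left_limit:
  fixes g F :: "real \<Rightarrow> real"
  assumes "x \<le> a" and g: "\<And>u. u \<in> {a..b} \<Longrightarrow> g u \<ge> 0" and "x = a \<Longrightarrow> g a = 0"
    and "isCont F x"
    and int: "\<And>y. y < x \<Longrightarrow> y \<noteq> c \<Longrightarrow> ((\<lambda>u. g u / (y - u)) has_integral F y) {a..b}"
  shows "((\<lambda>u. g u / (x - u)) has_integral F x) {a..b}"
proof -
  obtain xs where xs: "\<And>n. xs n < x" "\<And>n. xs n \<noteq> c" "incseq xs" "xs \<longlonglongrightarrow> x"
    using incseq_tendsto_left_avoiding[of x c] by blast
  define f where "f n u = g u / (xs n - u)" for n u
  have f_int: "(f n has_integral F (xs n)) {a..b}" for n
    unfolding f_def using int xs(1,2) by blast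
  then have f_integral: "integral {a..b} (f n) = F (xs n)" for n
    by (rule integral_unique)
  have F_lim: "(\<lambda>n. F (xs n)) \<longlonglongrightarrow> F x"
    using isCont_tendsto_compose[OF assms(4) xs(4)] .
  have "(\<lambda>u. g u / (x - u)) integrable_on {a..b} \<and>
      (\<lambda>n. integral {a..b} (f n)) \<longlonglongrightarrow> integral {a..b} (\<lambda>u. g u / (x - u))"
  proof (rule monotone_convergence_decreasing)
    show "f n integrable_on {a..b}" for n using f_int by (rule has_integral_integrable)
    show "f (Suc n) u \<le> f n u" if "u \<in> {a..b}" for n u
      unfolding f_def
    proof (rule divide_left_mono)
      show "xs n - u \<le> xs (Suc n) - u" using incseq_SucD[OF xs(3)] by simp
      show "0 \<le> g u" using g[OF that] .
      show "0 < (xs (Suc n) - u) * (xs n - u)"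
        using xs(1)[of n] xs(1)[of "Suc n"] that assms(1) by (intro mult_neg_neg) auto
    qed
    show "(\<lambda>n. f n u) \<longlonglongrightarrow> g u / (x - u)" if "u \<in> {a..b}" for u
    proof (cases "x = u")
      case True
      then have "x = a" using assms(1) that by auto
      then show ?thesis using True assms(3) by (simp add: f_def)
    next
      case False
      then show ?thesis unfolding f_def by (intro tendsto_intros xs(4)) simp
    qed
    show "bounded (range (\<lambda>n. integral {a..b} (f n)))"
      using convergent_imp_bounded[OF F_lim] by (simp add: f_integral)
  qed
  moreover have "(\<lambda>n. integral {a..b} (f n)) \<longlonglongrightarrow> F x"
    using F_lim by (simp add: f_integral)
  ultimately show ?thesis
    using LIMSEQ_unique has_integral_integrable_integral by metis
qed

section \<open>The function \<open>RD\<close>\<close>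

text \<open>The second root of \<open>z (z - C1) = C2\<^sup>2\<close>.\<close>
definition xi_m :: "real \<Rightarrow> real \<Rightarrow> real" where
  "xi_m C1 C2 = C1 - xi_p C1 C2"

lemma xi_p_mult_xi_m: "xi_p C1 C2 * xi_m C1 C2 = - C2\<^sup>2"
proof -
  have "(sqrt (C1\<^sup>2 + 4 * C2\<^sup>2))\<^sup>2 = C1\<^sup>2 + 4 * C2\<^sup>2" by simp
  then show ?thesis
    by (simp add: xi_m_def xi_p_def field_simps power2_eq_square)
qed

lemma psiD_nonneg: "C2 > 0 \<Longrightarrow> u \<in> {0..C1} \<Longrightarrow> psiD C1 C2 u \<ge> 0"
  unfolding psiD_def by (intro divide_nonneg_pos mult_nonneg_nonneg mult_pos_pos add_pos_nonneg) auto

lemma continuous_on_Stieltjes_integrand: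
  fixes \<xi> :: complex
  assumes "C2 > 0" and "\<xi> \<notin> of_real ` {0..C1}"
  shows "continuous_on {0..C1} (\<lambda>u. of_real (psiD C1 C2 u) / (\<xi> - of_real u))"
proof -
  have "C2\<^sup>2 + u * (C1 - u) \<noteq> 0" if "u \<in> {0..C1}" for u
    using that assms(1) by (intro order.strict_implies_not_eq[symmetric] add_pos_nonneg) auto
  moreover have "\<xi> \<noteq> of_real u" if "u \<in> {0..C1}" for u
    using that assms(2) by auto
  ultimately show ?thesis
    unfolding psiD_def by (intro continuous_intros) auto
qed

lemma Im_minus_RD_pos:
  assumes "C2 > 0" and "Im \<xi> > 0"
  shows "Im (- RD C1 C2 \<xi>) > 0"
proof -
  define w where "w = sqrtD C1 \<xi> - of_real C2"
  have "Im w > 0" unfolding w_def using Im_sqrtD_pos[OF assms(2)] by simp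
  then have "(Re w)\<^sup>2 + (Im w)\<^sup>2 > 0" by (simp add: add_nonneg_pos)
  moreover have "Im (- RD C1 C2 \<xi>) = C2 * Im w / ((Re w)\<^sup>2 + (Im w)\<^sup>2)"
    by (simp add: RD_def w_def[symmetric] Im_divide power2_eq_square)
  ultimately show ?thesis using assms(1) \<open>Im w > 0\<close> by simp
qed

definition RD_reg :: "real \<Rightarrow> real \<Rightarrow> real \<Rightarrow> real" where
  "RD_reg C1 C2 x = C2 / (- sqrt (- x) * sqrt (C1 - x) - C2) - resD C1 C2 / (x - xi_p C1 C2)"

lemma of_real_RD_reg:
  assumes "C1 \<ge> 0" and "x \<le> 0"
  shows "of_real (RD_reg C1 C2 x)
    = RD C1 C2 (of_real x) - of_real (resD C1 C2) / (of_real x - of_real (xi_p C1 C2))"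
  using assms by (simp add: RD_def RD_reg_def sqrtD_of_real_nonpos)

context
  fixes C1 C2 :: real
  assumes C1: "C1 > 0" and C2: "C2 > 0"
begin

lemma xi_p_gt: "xi_p C1 C2 > C1"
proof -
  have "sqrt (C1\<^sup>2 + 4 * C2\<^sup>2) > C1"
    using C1 C2 by (intro real_less_rsqrt) (simp add: power2_eq_square)
  then show ?thesis by (simp add: xi_p_def)
qed

lemma xi_m_neg: "xi_m C1 C2 < 0"
  using xi_p_gt C1 by (simp add: xi_m_def)

lemma xi_p_xi_m_factorization:
  fixes z :: complex
  shows "z * (z - of_real C1) = (z - of_real (xi_p C1 C2)) * (z - of_real (xi_m C1 C2)) + (of_real C2)\<^sup>2"
proof -
  define p m where "p = (of_real (xi_p C1 C2) :: complex)" and "m = (of_real (xi_m C1 C2) :: complex)"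
  have sum: "p + m = of_real C1" by (simp add: p_def m_def xi_m_def)
  have prod: "p * m = - (of_real C2)\<^sup>2"
    unfolding p_def m_def by (metis xi_p_mult_xi_m of_real_mult of_real_minus of_real_power)
  have "(z - p) * (z - m) + (of_real C2)\<^sup>2 = z * z - (p + m) * z + (p * m + (of_real C2)\<^sup>2)"
    by (simp add: algebra_simps)
  also have "\<dots> = z * (z - of_real C1)" unfolding sum prod by (simp add: algebra_simps)
  finally show ?thesis by (simp add: p_def m_def)
qed

lemma resD_eq: "resD C1 C2 = 2 * C2\<^sup>2 / (xi_p C1 C2 - xi_m C1 C2)"
proof -
  have "xi_p C1 C2 * (xi_p C1 C2 - C1) = C2\<^sup>2"
    using xi_p_mult_xi_m by (simp add: xi_m_def algebra_simps)
  then have "sqrt (xi_p C1 C2 * (xi_p C1 C2 - C1)) = C2" using C2 by simp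
  then show ?thesis by (simp add: resD_def xi_m_def power2_eq_square)
qed

lemma sqrtD_xi_p: "sqrtD C1 (of_real (xi_p C1 C2)) = of_real C2"
proof -
  have "xi_p C1 C2 * (xi_p C1 C2 - C1) = C2\<^sup>2"
    using xi_p_mult_xi_m by (simp add: xi_m_def algebra_simps)
  then show ?thesis
    using xi_p_gt C1 C2 by (simp add: sqrtD_of_real_ge real_sqrt_mult[symmetric])
qed

lemma sqrtD_xi_m: "sqrtD C1 (of_real (xi_m C1 C2)) = - of_real C2"
proof -
  have "- xi_m C1 C2 * (C1 - xi_m C1 C2) = C2\<^sup>2"
    using xi_p_mult_xi_m by (simp add: xi_m_def algebra_simps)
  then show ?thesis
    using xi_m_neg C1 C2 by (simp add: sqrtD_of_real_nonpos real_sqrt_mult[symmetric])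
qed

lemma sqrtD_eq_C2_iff: "sqrtD C1 z = of_real C2 \<longleftrightarrow> z = of_real (xi_p C1 C2)"
  and sqrtD_eq_minus_C2_iff: "sqrtD C1 z = - of_real C2 \<longleftrightarrow> z = of_real (xi_m C1 C2)"
proof -
  have "(sqrtD C1 z)\<^sup>2 = (of_real C2)\<^sup>2 \<longleftrightarrow> z = of_real (xi_p C1 C2) \<or> z = of_real (xi_m C1 C2)"
    by (simp add: sqrtD_square xi_p_xi_m_factorization)
  moreover have "(of_real C2 :: complex) \<noteq> - of_real C2" using C2 by simp
  ultimately show "sqrtD C1 z = of_real C2 \<longleftrightarrow> z = of_real (xi_p C1 C2)"
    and "sqrtD C1 z = - of_real C2 \<longleftrightarrow> z = of_real (xi_m C1 C2)"
    using sqrtD_xi_p sqrtD_xi_m by (auto simp: power2_eq_iff)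
qed

lemma RD_analytic:
  "RD C1 C2 analytic_on (- (of_real ` {0..C1} \<union> {of_real (xi_p C1 C2)}))"
proof -
  let ?U = "- (complex_of_real ` {0..C1} \<union> {complex_of_real (xi_p C1 C2)})"
  have "compact (complex_of_real ` {0..C1})"
    by (intro compact_continuous_image continuous_intros compact_Icc)
  then have "open ?U" by (intro open_Compl closed_Un compact_imp_closed) auto
  moreover have "RD C1 C2 holomorphic_on ?U"
    unfolding RD_def[abs_def]
  proof (intro holomorphic_intros)
    show "sqrtD C1 holomorphic_on ?U"
      using holomorphic_on_sqrtD[OF less_imp_le[OF C1]] by (rule holomorphic_on_subset) auto
  qed (use sqrtD_eq_C2_iff in auto)
  ultimately show ?thesis by (simp add: analytic_on_open)
qed

lemma RD_simple_pole:
  "simple_pole_res (RD C1 C2) (of_real (xi_p C1 C2)) (of_real (resD C1 C2))"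
proof -
  define p m where "p = complex_of_real (xi_p C1 C2)" and "m = complex_of_real (xi_m C1 C2)"
  define C r where "C = complex_of_real C2" and "r = complex_of_real (resD C1 C2)"
  define e where "e = xi_p C1 C2 - C1"
  define g where "g w = C / (sqrtD C1 w + C) - r / (w - m)" for w
  have "e > 0" using xi_p_gt by (simp add: e_def)
  have Re_ball: "Re w > C1" if "w \<in> ball p e" for w
  proof -
    have "\<bar>Re w - xi_p C1 C2\<bar> \<le> norm (w - p)"
      using abs_Re_le_cmod[of "w - p"] by (simp add: p_def)
    also have "\<dots> < e" using that by (simp add: dist_norm norm_minus_commute)
    finally show ?thesis unfolding e_def by linarith
  qed
  then have ball_sub: "ball p e \<subseteq> - of_real ` {0..C1}" by force
  have wm: "w \<noteq> m" if "w \<in> ball p e" for w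
    using Re_ball[OF that] xi_m_neg C1 by (auto simp: m_def)
  have sum_ne: "sqrtD C1 w + C \<noteq> 0" if "w \<in> ball p e" for w
  proof -
    have "sqrtD C1 w \<noteq> - C"
      using wm[OF that] sqrtD_eq_minus_C2_iff[of w] by (simp add: C_def m_def)
    then show ?thesis by (simp add: eq_neg_iff_add_eq_0)
  qed
  have "g holomorphic_on ball p e"
    unfolding g_def[abs_def]
  proof (intro holomorphic_intros)
    show "sqrtD C1 holomorphic_on ball p e"
      using holomorphic_on_sqrtD[OF less_imp_le[OF C1]] ball_sub by (rule holomorphic_on_subset)
  qed (use wm sum_ne in auto)
  moreover have "RD C1 C2 w = r / (w - p) + g w" if "w \<in> ball p e - {p}" for w
  proof -
    have "(sqrtD C1 w)\<^sup>2 = (w - p) * (w - m) + C\<^sup>2"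
      unfolding sqrtD_square xi_p_xi_m_factorization by (simp add: p_def m_def C_def)
    moreover have "r * ((w - m) - (w - p)) = 2 * C\<^sup>2"
      using resD_eq xi_p_gt xi_m_neg C1
      by (simp add: r_def p_def m_def C_def)
    ultimately have "C / (sqrtD C1 w - C) = r / (w - p) + (C / (sqrtD C1 w + C) - r / (w - m))"
      using that wm sqrtD_eq_C2_iff[of w] sqrtD_eq_minus_C2_iff[of w]
      by (intro pole_split_identity) (auto simp: p_def m_def C_def)
    then show ?thesis by (simp add: RD_def g_def C_def)
  qed
  moreover have "r \<noteq> 0"
    using resD_eq xi_p_gt xi_m_neg C1 C2 by (simp add: r_def)
  ultimately show ?thesis
    unfolding simple_pole_res_def p_def[symmetric] r_def[symmetric] using \<open>e > 0\<close> by blast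
qed

lemma xi_p_xi_m_factorization_real: "(xi_p C1 C2 - y) * (y - xi_m C1 C2) = C2\<^sup>2 + y * (C1 - y)"
proof -
  have "(xi_p C1 C2 - y) * (y - xi_m C1 C2)
      = y * (xi_p C1 C2 + xi_m C1 C2) - xi_p C1 C2 * xi_m C1 C2 - y * y"
    by (simp add: algebra_simps)
  then show ?thesis
    using xi_p_mult_xi_m by (simp add: xi_m_def algebra_simps power2_eq_square)
qed

text \<open>Under \<open>u = C1 sin\<^sup>2 t\<close> the square root in \<open>psiD\<close> becomes \<open>C1 sin t cos t\<close>, which
  cancels against the Jacobian.\<close>
lemma psiD_sin_sq:
  assumes "0 \<le> t" "t \<le> pi / 2"
  defines "y \<equiv> C1 * (sin t)\<^sup>2"
  shows "2 * C1 * sin t * cos t * psiD C1 C2 y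
    = 2 * C2 / pi * (1 - C2\<^sup>2 / ((xi_p C1 C2 - y) * (y - xi_m C1 C2)))"
proof -
  have "sin t \<ge> 0" by (rule sin_ge_zero) (use assms pi_gt_zero in linarith)+
  moreover have "cos t \<ge> 0" by (rule cos_ge_zero) (use assms pi_gt_zero in linarith)+
  moreover have "C1 - y = C1 * (cos t)\<^sup>2"
    unfolding y_def by (simp add: cos_squared_eq algebra_simps)
  then have N: "y * (C1 - y) = (C1 * sin t * cos t)\<^sup>2"
    by (simp add: y_def power_mult_distrib power2_eq_square)
  ultimately have "sqrt (y * (C1 - y)) = C1 * sin t * cos t" using C1 by simp
  moreover have "C2\<^sup>2 + y * (C1 - y) > 0" unfolding N using C2 by (simp add: add_pos_nonneg)
  ultimately show ?thesis
    unfolding psiD_def xi_p_xi_m_factorization_real using N by (simp add: field_simps power2_eq_square)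
qed

lemma Stieltjes_integrand_sin_sq:
  fixes \<xi> :: complex
  assumes xi: "\<xi> \<notin> of_real ` {0..C1}" "\<xi> \<noteq> of_real (xi_p C1 C2)" "\<xi> \<noteq> of_real (xi_m C1 C2)"
    and t: "t \<in> {0..pi / 2}"
  defines "p \<equiv> complex_of_real (xi_p C1 C2)" and "m \<equiv> complex_of_real (xi_m C1 C2)"
    and "Y \<equiv> complex_of_real (C1 * (sin t)\<^sup>2)"
  shows "(2 * C1 * sin t * cos t) *\<^sub>R (of_real (psiD C1 C2 (C1 * (sin t)\<^sup>2)) / (\<xi> - Y))
    = of_real (2 * C2 / pi) * (1 / (\<xi> - Y) + (of_real C2)\<^sup>2 *
        (1 / ((m - p) * (\<xi> - p)) * (1 / (p - Y)) - 1 / ((m - p) * (\<xi> - m)) * (1 / (m - Y))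
          + 1 / ((\<xi> - p) * (\<xi> - m)) * (1 / (\<xi> - Y))))"
proof -
  define y where "y = C1 * (sin t)\<^sup>2"
  have "(sin t)\<^sup>2 \<le> 1" by (simp add: sin_squared_eq)
  then have y: "y \<in> {0..C1}" using C1 by (simp add: y_def mult_left_le)
  have "\<xi> \<noteq> Y" using xi(1) y unfolding Y_def y_def[symmetric] by blast
  moreover have "xi_p C1 C2 \<noteq> y" "xi_m C1 C2 \<noteq> y" "xi_p C1 C2 \<noteq> xi_m C1 C2"
    using y xi_p_gt xi_m_neg by auto
  then have "p \<noteq> Y" "m \<noteq> Y" "p \<noteq> m"
    unfolding p_def m_def Y_def y_def[symmetric] of_real_eq_iff .
  moreover have "\<xi> \<noteq> p" "\<xi> \<noteq> m" using xi(2,3) by (simp_all add: p_def m_def)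
  ultimately have pf: "(1 - (of_real C2)\<^sup>2 / ((p - Y) * (Y - m))) / (\<xi> - Y) = 1 / (\<xi> - Y)
      + (of_real C2)\<^sup>2 * (1 / ((m - p) * (\<xi> - p) * (p - Y)) - 1 / ((m - p) * (\<xi> - m) * (m - Y))
        + 1 / ((\<xi> - p) * (\<xi> - m) * (\<xi> - Y)))"
    by (intro partial_fractions_three) simp_all
  have "(2 * C1 * sin t * cos t) *\<^sub>R (of_real (psiD C1 C2 y) / (\<xi> - Y))
      = of_real (2 * C1 * sin t * cos t * psiD C1 C2 y) / (\<xi> - Y)"
    by (simp add: scaleR_conv_of_real)
  also have "\<dots> = of_real (2 * C2 / pi * (1 - C2\<^sup>2 / ((xi_p C1 C2 - y) * (y - xi_m C1 C2)))) / (\<xi> - Y)"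
    using psiD_sin_sq[of t] t by (simp add: y_def)
  also have "\<dots> = of_real (2 * C2 / pi) * ((1 - (of_real C2)\<^sup>2 / ((p - Y) * (Y - m))) / (\<xi> - Y))"
    by (simp add: p_def m_def Y_def y_def)
  finally show ?thesis unfolding pf by (simp add: y_def divide_divide_eq_left)
qed

lemma Stieltjes_value_eq:
  fixes \<xi> :: complex
  assumes xi: "\<xi> \<notin> of_real ` {0..C1}" "\<xi> \<noteq> of_real (xi_p C1 C2)" "\<xi> \<noteq> of_real (xi_m C1 C2)"
  defines "p \<equiv> complex_of_real (xi_p C1 C2)" and "m \<equiv> complex_of_real (xi_m C1 C2)"
    and "C \<equiv> complex_of_real C2" and "s \<equiv> sqrtD C1 \<xi>"
    and "P \<equiv> \<xi> - complex_of_real (xi_p C1 C2)" and "M \<equiv> \<xi> - complex_of_real (xi_m C1 C2)"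
    and "h \<equiv> complex_of_real (pi / 2)" and "K \<equiv> complex_of_real (2 * C2 / pi)"
  shows "K * (h / s + C\<^sup>2 * (1 / ((m - p) * P) * (h / C) - 1 / ((m - p) * M) * (h / - C)
      + 1 / (P * M) * (h / s))) = RD C1 C2 \<xi> - of_real (resD C1 C2) / (\<xi> - of_real (xi_p C1 C2))"
proof -
  have "\<xi> \<noteq> 0" "\<xi> \<noteq> of_real C1" using xi(1) C1 by force+
  then have "s \<noteq> 0" using sqrtD_square[of C1 \<xi>] by (auto simp: s_def)
  have "P \<noteq> 0" "M \<noteq> 0" using xi(2,3) by (auto simp: P_def M_def p_def m_def)
  have "C \<noteq> 0" using C2 by (simp add: C_def)
  have "s \<noteq> C" using xi(2) sqrtD_eq_C2_iff by (simp add: s_def C_def)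
  have "M - P = p - m" by (simp add: P_def M_def p_def m_def)
  moreover have "p \<noteq> m" using xi_p_gt xi_m_neg C1 by (simp add: p_def m_def)
  ultimately have "M \<noteq> P" by auto
  have s2: "s\<^sup>2 = P * M + C\<^sup>2"
    unfolding s_def sqrtD_square xi_p_xi_m_factorization by (simp add: P_def M_def p_def m_def C_def)
  have "K * h = C" by (simp add: K_def h_def C_def)
  define \<alpha> \<beta> \<gamma> where "\<alpha> = 1 / ((m - p) * P)" and "\<beta> = 1 / ((m - p) * M)" and "\<gamma> = 1 / (P * M)"
  have "K * (h / s + C\<^sup>2 * (\<alpha> * (h / C) - \<beta> * (h / - C) + \<gamma> * (h / s)))
      = (K * h) * (1 / s + C\<^sup>2 * (\<alpha> / C + \<beta> / C + \<gamma> / s))"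
    by (simp add: algebra_simps)
  also have "\<dots> = C * (1 / s + C * \<alpha> + C * \<beta> + C\<^sup>2 * \<gamma> / s)"
    using \<open>K * h = C\<close> \<open>C \<noteq> 0\<close> by (simp add: power2_eq_square distrib_left add.assoc)
  also have "\<dots> = C / s + C\<^sup>2 * \<alpha> + C\<^sup>2 * \<beta> + C ^ 3 * \<gamma> / s"
    by (simp add: distrib_left power2_eq_square power3_eq_cube mult.assoc)
  also have "\<dots> = C / s + C ^ 3 / (P * M * s) - C\<^sup>2 / ((M - P) * P) - C\<^sup>2 / ((M - P) * M)"
  proof -
    have "m - p = - (M - P)" using \<open>M - P = p - m\<close> by simp
    then show ?thesis unfolding \<alpha>_def \<beta>_def \<gamma>_def by (simp del: minus_diff_eq)
  qed
  also have "\<dots> = C / (s - C) - 2 * C\<^sup>2 / ((M - P) * P)"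
    using Stieltjes_value_identity[OF s2 \<open>P \<noteq> 0\<close> \<open>M \<noteq> 0\<close> \<open>s \<noteq> 0\<close> \<open>s \<noteq> C\<close> \<open>M \<noteq> P\<close>] .
  also have "\<dots> = RD C1 C2 \<xi> - of_real (resD C1 C2) / (\<xi> - of_real (xi_p C1 C2))"
    unfolding RD_def resD_eq \<open>M - P = p - m\<close> by (simp add: s_def C_def P_def p_def m_def)
  finally show ?thesis unfolding \<alpha>_def \<beta>_def \<gamma>_def .
qed

lemma Stieltjes_repr_off_roots:
  fixes \<xi> :: complex
  assumes xi: "\<xi> \<notin> of_real ` {0..C1}" "\<xi> \<noteq> of_real (xi_p C1 C2)" "\<xi> \<noteq> of_real (xi_m C1 C2)"
  shows "((\<lambda>u. of_real (psiD C1 C2 u) / (\<xi> - of_real u)) has_integral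
           (RD C1 C2 \<xi> - of_real (resD C1 C2) / (\<xi> - of_real (xi_p C1 C2)))) {0..C1}"
proof -
  define p m where "p = complex_of_real (xi_p C1 C2)" and "m = complex_of_real (xi_m C1 C2)"
  define C s where "C = complex_of_real C2" and "s = sqrtD C1 \<xi>"
  define P M where "P = \<xi> - p" and "M = \<xi> - m"
  define h K where "h = complex_of_real (pi / 2)" and "K = complex_of_real (2 * C2 / pi)"
  define f where "f z t = 1 / (z - complex_of_real (C1 * (sin t)\<^sup>2))" for z t
  have kernel: "(f z has_integral h / sqrtD C1 z) {0..pi / 2}" if "z \<notin> of_real ` {0..C1}" for z
    unfolding f_def h_def using sin_sq_kernel_has_integral[OF C1 that] .
  have "p \<notin> of_real ` {0..C1}" "m \<notin> of_real ` {0..C1}"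
    using xi_p_gt xi_m_neg by (auto simp: p_def m_def)
  then have "(f p has_integral h / C) {0..pi / 2}" "(f m has_integral h / - C) {0..pi / 2}"
    using kernel[of p] kernel[of m] sqrtD_xi_p sqrtD_xi_m unfolding p_def m_def C_def by simp_all
  with kernel[OF xi(1)] have "((\<lambda>t. K * (f \<xi> t + C\<^sup>2 * (1 / ((m - p) * P) * f p t
      - 1 / ((m - p) * M) * f m t + 1 / (P * M) * f \<xi> t))) has_integral
      K * (h / s + C\<^sup>2 * (1 / ((m - p) * P) * (h / C) - 1 / ((m - p) * M) * (h / - C)
        + 1 / (P * M) * (h / s)))) {0..pi / 2}"
    unfolding s_def by (intro has_integral_mult_right has_integral_add has_integral_diff)
  then have "((\<lambda>t. (2 * C1 * sin t * cos t) *\<^sub>R (of_real (psiD C1 C2 (C1 * (sin t)\<^sup>2))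
      / (\<xi> - of_real (C1 * (sin t)\<^sup>2)))) has_integral
      K * (h / s + C\<^sup>2 * (1 / ((m - p) * P) * (h / C) - 1 / ((m - p) * M) * (h / - C)
        + 1 / (P * M) * (h / s)))) {0..pi / 2}"
  proof (rule has_integral_eq[rotated])
    fix t assume t: "t \<in> {0..pi / 2}"
    show "K * (f \<xi> t + C\<^sup>2 * (1 / ((m - p) * P) * f p t - 1 / ((m - p) * M) * f m t
        + 1 / (P * M) * f \<xi> t)) = (2 * C1 * sin t * cos t) *\<^sub>R (of_real (psiD C1 C2 (C1 * (sin t)\<^sup>2))
        / (\<xi> - of_real (C1 * (sin t)\<^sup>2)))"
      unfolding Stieltjes_integrand_sin_sq[OF xi t] f_def p_def m_def P_def M_def K_def C_def ..
  qed
  then have "((\<lambda>u. of_real (psiD C1 C2 u) / (\<xi> - of_real u)) has_integral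
      K * (h / s + C\<^sup>2 * (1 / ((m - p) * P) * (h / C) - 1 / ((m - p) * M) * (h / - C)
        + 1 / (P * M) * (h / s)))) {0..C1}"
    by (rule has_integral_sin_sq_substitution[OF less_imp_le[OF C1]
          continuous_on_Stieltjes_integrand[OF C2 xi(1)], rotated])
  moreover have "K * (h / s + C\<^sup>2 * (1 / ((m - p) * P) * (h / C) - 1 / ((m - p) * M) * (h / - C)
      + 1 / (P * M) * (h / s))) = RD C1 C2 \<xi> - of_real (resD C1 C2) / (\<xi> - of_real (xi_p C1 C2))"
    unfolding p_def m_def C_def s_def P_def M_def h_def K_def by (rule Stieltjes_value_eq[OF xi])
  ultimately show ?thesis by simp
qed

lemma psiD_Stieltjes_real_neg:
  assumes "x < 0" and "x \<noteq> xi_m C1 C2"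
  shows "((\<lambda>u. psiD C1 C2 u / (x - u)) has_integral RD_reg C1 C2 x) {0..C1}"
proof -
  have "complex_of_real x \<notin> of_real ` {0..C1}" using assms(1) by auto
  moreover have "complex_of_real x \<noteq> of_real (xi_p C1 C2)"
    using assms(1) xi_p_gt C1 by simp
  moreover have "complex_of_real x \<noteq> of_real (xi_m C1 C2)" using assms(2) by simp
  ultimately have "((\<lambda>u. of_real (psiD C1 C2 u) / (of_real x - of_real u)) has_integral
      complex_of_real (RD_reg C1 C2 x)) {0..C1}"
    unfolding of_real_RD_reg[OF less_imp_le[OF C1] less_imp_le[OF assms(1)]]
    by (rule Stieltjes_repr_off_roots)
  then have "((\<lambda>u. complex_of_real (psiD C1 C2 u / (x - u))) has_integral
      complex_of_real (RD_reg C1 C2 x)) {0..C1}"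
    by simp
  from has_integral_linear[OF this bounded_linear_Re] show ?thesis by (simp add: o_def)
qed

lemma psiD_Stieltjes_real_nonpos:
  assumes "x \<le> 0"
  shows "((\<lambda>u. psiD C1 C2 u / (x - u)) has_integral RD_reg C1 C2 x) {0..C1}"
proof (rule has_integral_div_diff_left_limit[where c = "xi_m C1 C2"])
  show "psiD C1 C2 u \<ge> 0" if "u \<in> {0..C1}" for u using psiD_nonneg[OF C2 that] .
  show "psiD C1 C2 0 = 0" by (simp add: psiD_def)
  have "sqrt (- x) * sqrt (C1 - x) \<ge> 0" using assms C1 by simp
  then have "- sqrt (- x) * sqrt (C1 - x) - C2 \<noteq> 0" using C2 by linarith
  moreover have "x - xi_p C1 C2 \<noteq> 0" using assms xi_p_gt C1 by simp
  ultimately show "isCont (RD_reg C1 C2) x"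
    unfolding RD_reg_def[abs_def] by (intro continuous_intros)
  show "((\<lambda>u. psiD C1 C2 u / (y - u)) has_integral RD_reg C1 C2 y) {0..C1}"
    if "y < x" "y \<noteq> xi_m C1 C2" for y
    using psiD_Stieltjes_real_neg that assms by simp
qed (use assms in simp)

lemma Stieltjes_repr:
  assumes "\<xi> \<notin> of_real ` {0..xi_p C1 C2}"
  shows "((\<lambda>u. of_real (psiD C1 C2 u) / (\<xi> - of_real u)) has_integral
           (RD C1 C2 \<xi> - of_real (resD C1 C2) / (\<xi> - of_real (xi_p C1 C2)))) {0..C1}"
proof (cases "\<xi> = of_real (xi_m C1 C2)")
  case True
  have m: "xi_m C1 C2 \<le> 0" using xi_m_neg by simp
  have "((\<lambda>u. complex_of_real (psiD C1 C2 u / (xi_m C1 C2 - u))) has_integral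
      complex_of_real (RD_reg C1 C2 (xi_m C1 C2))) {0..C1}"
    by (rule has_integral_of_real[OF psiD_Stieltjes_real_nonpos[OF m]])
  then show ?thesis
    unfolding True of_real_RD_reg[OF less_imp_le[OF C1] m] by simp
next
  case False
  have "{0..C1} \<subseteq> {0..xi_p C1 C2}" using xi_p_gt by auto
  then have "\<xi> \<notin> of_real ` {0..C1}" using assms by blast
  moreover have "\<xi> \<noteq> of_real (xi_p C1 C2)" using assms xi_p_gt C1 by auto
  ultimately show ?thesis by (rule Stieltjes_repr_off_roots[OF _ _ False])
qed

lemma psiD_inverse_moment:
  "((\<lambda>u. psiD C1 C2 u / u) has_integral (1 - resD C1 C2 / xi_p C1 C2)) {0..C1}"
proof -
  have "((\<lambda>u. - (psiD C1 C2 u / (0 - u))) has_integral - RD_reg C1 C2 0) {0..C1}"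
    by (intro has_integral_neg psiD_Stieltjes_real_nonpos) simp
  moreover have "- RD_reg C1 C2 0 = 1 - resD C1 C2 / xi_p C1 C2"
    using C2 by (simp add: RD_reg_def)
  ultimately show ?thesis by simp
qed

end

theorem mainTheorem2:
  fixes C1 C2 :: real
  assumes "C1 > 0" and "C2 > 0"
  shows "RD C1 C2 analytic_on
           (- (complex_of_real ` {0..C1} \<union> {complex_of_real (xi_p C1 C2)}))
       \<and> simple_pole_res (RD C1 C2) (complex_of_real (xi_p C1 C2)) (complex_of_real (resD C1 C2))
       \<and> (\<forall>\<xi>. Im \<xi> > 0 \<longrightarrow> Im (- RD C1 C2 \<xi>) > 0)
       \<and> (\<forall>\<xi>. \<xi> \<notin> complex_of_real ` {0..xi_p C1 C2} \<longrightarrow>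
            ((\<lambda>u. complex_of_real (psiD C1 C2 u) / (\<xi> - complex_of_real u)) has_integral
               (RD C1 C2 \<xi> - complex_of_real (resD C1 C2) / (\<xi> - complex_of_real (xi_p C1 C2)))) {0..C1})
       \<and> ((\<lambda>u. psiD C1 C2 u / u) has_integral (1 - resD C1 C2 / xi_p C1 C2)) {0..C1}"
  using RD_analytic[OF assms] RD_simple_pole[OF assms] Im_minus_RD_pos[OF assms(2)]
    Stieltjes_repr[OF assms] psiD_inverse_moment[OF assms]
  by blast

end
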